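(* Let $I=[x,x+y]\subset[0,\infty)$ with $y>0$, let $k\in\mathbb{N}$, $l\in\mathbb{Z}$, let $f\in W^{1,1}(I)$ be non-negative and let $z\geq 1$. Define \[ S_k(z) = \sum_{\substack{n\leq z\\ \gcd(n,k)=1}} \frac{\mu(n)^2}{\varphi(n)}, \qquad H_k(z) = \sum_{\substack{n\leq z\\ \gcd(n,k)=1}} \mu(n)^2 \frac{\sigma(n)}{\varphi(n)}. \] Then \[ \sum_{\substack{n\in I\cap(l+k\mathbb{Z})\\ \gcd(n,P(z,k))=1}} f(n) \leq \frac{\|f\|_{1,I}}{k\,S_k(z)} + \bigl(\|f\|_{\infty,I} + \|f'\|_{1,I}\bigr) \frac{H_k(z)^2}{S_k(z)^2}. \]
   Context: $W^{1,1}(I)$ denotes the closure of $C^1(I)$ with respect to the norm $\|f\|_{1,I}+\|f'\|_{1,I}$, where $\|g\|_{1,I}=\int_I|g(t)|\,dt$; it is regarded as a subspace of $C^0(I)$. $\|f\|_{\infty,I}=\sup_{t\in I}|f(t)|$. $P(z,k)=\prod_{p\le z,\ p\nmid k}p$ (product over primes). $\mu$ is the Möbius function, $\varphi$ Euler's totient function, $\sigma$ the sum-of-divisors function. *)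

theory Defs
  imports "HOL-Analysis.Analysis" "HOL-Number_Theory.Number_Theory" "HOL-Computational_Algebra.Squarefree"
begin

definition moebius_mu :: "nat \<Rightarrow> int" where
  "moebius_mu n = (if squarefree n then (-1) ^ card (prime_factors n) else 0)"

definition divisor_sigma :: "nat \<Rightarrow> nat" where
  "divisor_sigma n = (\<Sum>d\<in>{d. d dvd n}. d)"

definition Pzk :: "real \<Rightarrow> nat \<Rightarrow> nat" where
  "Pzk z k = (\<Prod>p\<in>{p::nat. prime p \<and> real p \<le> z \<and> \<not> p dvd k}. p)"

definition S_k :: "nat \<Rightarrow> real \<Rightarrow> real" where
  "S_k k z = (\<Sum>n\<in>{n::nat. 1 \<le> n \<and> real n \<le> z \<and> coprime n k}.
                 real_of_int (moebius_mu n) ^ 2 / real (totient n))"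

definition H_k :: "nat \<Rightarrow> real \<Rightarrow> real" where
  "H_k k z = (\<Sum>n\<in>{n::nat. 1 \<le> n \<and> real n \<le> z \<and> coprime n k}.
                 real_of_int (moebius_mu n) ^ 2 * real (divisor_sigma n) / real (totient n))"

definition C1_on :: "real set \<Rightarrow> (real \<Rightarrow> real) \<Rightarrow> (real \<Rightarrow> real) \<Rightarrow> bool" where
  "C1_on I u u' \<longleftrightarrow> (\<forall>t\<in>I. (u has_real_derivative u' t) (at t within I)) \<and> continuous_on I u'"

definition L1_norm :: "real set \<Rightarrow> (real \<Rightarrow> real) \<Rightarrow> real" where
  "L1_norm I g = integral I (\<lambda>t. \<bar>g t\<bar>)"

definition sup_norm :: "real set \<Rightarrow> (real \<Rightarrow> real) \<Rightarrow> real" where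
  "sup_norm I g = (SUP t\<in>I. \<bar>g t\<bar>)"

text \<open>W^{1,1}(I) as the closure of C^1(I) w.r.t. the norm L1(f)+L1(f'), viewed inside C^0(I):
  f is continuous on I, f' is its (generalised) derivative, an L^1 function on I, and
  there are C^1 functions u_n with L1(u_n - f) + L1(u_n' - f') \<rightarrow> 0.\<close>
definition W11 :: "real set \<Rightarrow> (real \<Rightarrow> real) \<Rightarrow> (real \<Rightarrow> real) \<Rightarrow> bool" where
  "W11 I f f' \<longleftrightarrow> continuous_on I f \<and> f' absolutely_integrable_on I \<and>
     (\<exists>u u'. (\<forall>m. C1_on I (u m) (u' m)) \<and>
        (\<lambda>m. L1_norm I (\<lambda>t. u m t - f t) + L1_norm I (\<lambda>t. u' m t - f' t)) \<longlonglongrightarrow> 0)"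

end

theory Submission
  imports Defs
begin

text \<open>Selberg's \<open>\<Lambda>\<^sup>2\<close> sieve. Take weights \<open>\<lambda>(d)\<close> supported on the squarefree divisors
  \<open>d \<le> z\<close> of \<open>P(z,k)\<close>, with \<open>\<lambda>(1) = 1\<close>. Then \<open>(\<Sum>d | n. \<lambda>(d))\<^sup>2\<close> is \<open>1\<close> when \<open>n\<close> is coprime to
  \<open>P(z,k)\<close> and nonnegative otherwise, so the sifted sum is at most
  \<open>\<Sum>d\<^sub>1 d\<^sub>2. \<lambda>(d\<^sub>1) \<lambda>(d\<^sub>2) T(d\<^sub>1,d\<^sub>2)\<close>, where \<open>T(d\<^sub>1,d\<^sub>2)\<close> sums \<open>f(n)\<close> over the
  \<open>n \<equiv> l (mod k)\<close> in \<open>I\<close> divisible by \<open>L = lcm(d\<^sub>1,d\<^sub>2)\<close>. Since \<open>L\<close> is coprime to \<open>k\<close>, these \<open>n\<close>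
  form one progression modulo \<open>kL\<close>, and comparing each of its points with the average of \<open>f\<close>
  over a surrounding period shows \<open>T(d\<^sub>1,d\<^sub>2) = \<integral>f / (kL)\<close> up to \<open>\<parallel>f\<parallel>\<^sub>\<infinity> + \<parallel>f'\<parallel>\<^sub>1\<close>.
  Selberg's optimal weights make the main quadratic form equal to \<open>1 / S\<^sub>k(z)\<close> and satisfy
  \<open>\<Sum>d. |\<lambda>(d)| \<le> H\<^sub>k(z) / S\<^sub>k(z)\<close>.\<close>

section \<open>Continuously differentiable and \<open>W\<^sup>1\<^sup>,\<^sup>1\<close> functions\<close>

lemma C1_on_subset: "C1_on I u u' \<Longrightarrow> J \<subseteq> I \<Longrightarrow> C1_on J u u'"
  unfolding C1_on_def by (auto intro: DERIV_subset continuous_on_subset)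

lemma C1_on_imp_continuous_on: "C1_on I u u' \<Longrightarrow> continuous_on I u"
  unfolding C1_on_def by (meson DERIV_continuous_on)

lemma C1_on_diff:
  "C1_on I u u' \<Longrightarrow> C1_on I v v' \<Longrightarrow> C1_on I (\<lambda>t. u t - v t) (\<lambda>t. u' t - v' t)"
  unfolding C1_on_def by (auto intro!: derivative_eq_intros continuous_on_diff)

lemma C1_on_abs_diff_le:
  assumes "C1_on {a..b} u u'" "a \<le> b"
  shows "\<bar>u b - u a\<bar> \<le> integral {a..b} (\<lambda>t. \<bar>u' t\<bar>)"
proof -
  have "(u' has_integral (u b - u a)) {a..b}"
    using assms unfolding C1_on_def has_real_derivative_iff_has_vector_derivative
    by (intro fundamental_theorem_of_calculus) auto
  moreover have "\<bar>integral {a..b} u'\<bar> \<le> integral {a..b} (\<lambda>t. \<bar>u' t\<bar>)"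
    using assms continuous_on_imp_absolutely_integrable_on[of a b u'] by (simp add: C1_on_def)
  ultimately show ?thesis by (simp add: integral_unique)
qed

lemma abs_sub_integral_divide_le:
  fixes f :: "real \<Rightarrow> real"
  assumes f: "continuous_on {c..d} f"
    and osc: "\<And>a b. a \<in> {c..d} \<Longrightarrow> b \<in> {c..d} \<Longrightarrow> \<bar>f b - f a\<bar> \<le> V"
    and M: "\<And>t. t \<in> {c..d} \<Longrightarrow> \<bar>f t\<bar> \<le> M"
    and p: "p \<in> {c..d}" and q: "0 < q" "d - c \<le> q"
  shows "\<bar>f p - integral {c..d} f / q\<bar> \<le> V + (1 - (d - c) / q) * M"
proof -
  have cd: "c \<le> d" using p by simp
  have fi: "f integrable_on {c..d}" by (rule integrable_continuous_interval[OF f])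
  have "norm (integral {c..d} (\<lambda>t. f p - f t)) \<le> integral {c..d} (\<lambda>t. V)"
    by (rule integral_norm_bound_integral) (use fi osc p in \<open>auto intro: integrable_diff\<close>)
  moreover have "integral {c..d} (\<lambda>t. f p - f t) = (d - c) * f p - integral {c..d} f"
    using cd fi by (subst integral_diff) auto
  ultimately have avg: "\<bar>(d - c) * f p - integral {c..d} f\<bar> \<le> (d - c) * V"
    using cd by simp
  have V0: "0 \<le> V" using osc[OF p p] by simp
  have "\<bar>(d - c) * f p - integral {c..d} f\<bar> \<le> q * V"
    using avg mult_right_mono[OF q(2) V0] by linarith
  then have "\<bar>((d - c) * f p - integral {c..d} f) / q\<bar> \<le> V"
    using q by (simp add: abs_divide divide_le_eq mult.commute)
  moreover have "\<bar>(1 - (d - c) / q) * f p\<bar> \<le> (1 - (d - c) / q) * M"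
    using M[OF p] q by (simp add: abs_mult mult_left_mono)
  moreover have "f p - integral {c..d} f / q
      = ((d - c) * f p - integral {c..d} f) / q + (1 - (d - c) / q) * f p"
    using q by (simp add: field_simps)
  ultimately show ?thesis by (smt (verit) abs_triangle_ineq)
qed

lemma C1_on_abs_le:
  assumes "C1_on {c..d} h h'" "t \<in> {c..d}" "c < d"
  shows "\<bar>h t\<bar> \<le> integral {c..d} (\<lambda>s. \<bar>h s\<bar>) / (d - c) + integral {c..d} (\<lambda>s. \<bar>h' s\<bar>)"
proof -
  have ch: "continuous_on {c..d} h" using assms C1_on_imp_continuous_on by blast
  have "bounded (h ` {c..d})"
    by (rule compact_imp_bounded[OF compact_continuous_image[OF ch compact_Icc]])
  then obtain M where M: "\<forall>t\<in>{c..d}. \<bar>h t\<bar> \<le> M" by (auto simp: bounded_iff)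
  have hi': "(\<lambda>s. \<bar>h' s\<bar>) integrable_on {c..d}"
    using assms(1) unfolding C1_on_def by (auto intro!: integrable_continuous_interval continuous_intros)
  have osc: "\<bar>h b - h a\<bar> \<le> integral {c..d} (\<lambda>s. \<bar>h' s\<bar>)" if "a \<in> {c..d}" "b \<in> {c..d}" for a b
  proof -
    have "\<bar>h b - h a\<bar> \<le> integral {min a b..max a b} (\<lambda>s. \<bar>h' s\<bar>)"
      using C1_on_abs_diff_le[OF C1_on_subset[OF assms(1)], of "min a b" "max a b"] that
      by (cases "a \<le> b") (auto simp: min_def max_def abs_minus_commute)
    also have "\<dots> \<le> integral {c..d} (\<lambda>s. \<bar>h' s\<bar>)"
      using that hi' by (intro integral_subset_le integrable_on_subinterval[OF hi']) auto
    finally show ?thesis .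
  qed
  have "\<bar>h t - integral {c..d} h / (d - c)\<bar> \<le> integral {c..d} (\<lambda>s. \<bar>h' s\<bar>)"
    using abs_sub_integral_divide_le[OF ch osc M[rule_format] assms(2), of "d - c"] assms(3) by simp
  moreover have "\<bar>integral {c..d} h\<bar> \<le> integral {c..d} (\<lambda>s. \<bar>h s\<bar>)"
    using continuous_on_imp_absolutely_integrable_on[OF ch] by simp
  then have "\<bar>integral {c..d} h / (d - c)\<bar> \<le> integral {c..d} (\<lambda>s. \<bar>h s\<bar>) / (d - c)"
    using assms(3) by (simp add: divide_right_mono)
  ultimately show ?thesis by linarith
qed

lemma L1_norm_nonneg: "0 \<le> L1_norm I g"
  unfolding L1_norm_def
  by (cases "(\<lambda>t. \<bar>g t\<bar>) integrable_on I") (auto intro: integral_nonneg simp: not_integrable_integral)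

lemma uniform_limit_eq_if_L1_limit:
  fixes u :: "nat \<Rightarrow> real \<Rightarrow> real"
  assumes lim: "uniform_limit {s..e} u g sequentially" and u: "\<And>m. continuous_on {s..e} (u m)"
    and f: "continuous_on {s..e} f" and L1: "(\<lambda>m. L1_norm {s..e} (\<lambda>t. u m t - f t)) \<longlonglongrightarrow> 0"
    and se: "s < e" and t: "t \<in> {s..e}"
  shows "g t = f t"
proof -
  have g: "continuous_on {s..e} g" by (rule uniform_limit_theorem[OF _ lim]) (use u in simp_all)
  define h where "h t = \<bar>g t - f t\<bar>" for t
  have ch: "continuous_on {s..e} h" unfolding h_def by (intro continuous_intros g f)
  have "integral {s..e} h \<le> 0 + \<delta>" if "0 < \<delta>" for \<delta>
  proof -
    have "\<forall>\<^sub>F m in sequentially. \<forall>t\<in>{s..e}. dist (u m t) (g t) < \<delta> / (e - s)"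
      using lim \<open>0 < \<delta>\<close> se unfolding uniform_limit_iff by simp
    then have "\<forall>\<^sub>F m in sequentially. integral {s..e} h \<le> \<delta> + L1_norm {s..e} (\<lambda>t. u m t - f t)"
    proof eventually_elim
      case (elim m)
      have i: "(\<lambda>t. \<bar>u m t - f t\<bar>) integrable_on {s..e}"
        by (intro integrable_continuous_interval continuous_on_rabs continuous_on_diff u f)
      have "integral {s..e} h \<le> integral {s..e} (\<lambda>t. \<delta> / (e - s) + \<bar>u m t - f t\<bar>)"
      proof (rule integral_le)
        show "h x \<le> \<delta> / (e - s) + \<bar>u m x - f x\<bar>" if "x \<in> {s..e}" for x
          using elim that unfolding h_def dist_real_def by fastforce
      qed (use integrable_continuous_interval[OF ch] integrable_add[OF _ i, of "\<lambda>_. \<delta> / (e - s)"] in auto)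
      also have "\<dots> = \<delta> + L1_norm {s..e} (\<lambda>t. u m t - f t)"
        using se i by (subst integral_add) (auto simp: L1_norm_def)
      finally show ?case .
    qed
    moreover have "(\<lambda>m. \<delta> + L1_norm {s..e} (\<lambda>t. u m t - f t)) \<longlonglongrightarrow> \<delta> + 0"
      by (intro tendsto_add tendsto_const L1)
    ultimately show ?thesis
      by (intro tendsto_le[OF trivial_limit_sequentially _ tendsto_const]) simp_all
  qed
  then have "integral {s..e} h \<le> 0" by (rule field_le_epsilon)
  moreover have "0 \<le> integral {s..e} h"
    by (rule integral_nonneg) (auto simp: h_def intro!: integrable_continuous_interval ch)
  ultimately have "integral (cbox s e) h = 0" by simp
  then have "h t = 0"
    using integral_cbox_eq_0_iff[of s e h] ch se t unfolding h_def by auto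
  then show ?thesis unfolding h_def by simp
qed

lemma C1_on_abs_diff_le_L1:
  assumes u: "C1_on {s..e} u u'" and v: "C1_on {s..e} v v'" and f: "continuous_on {s..e} f"
    and f': "f' absolutely_integrable_on {s..e}" and se: "s < e" and t: "t \<in> {s..e}"
  shows "\<bar>u t - v t\<bar> \<le> (L1_norm {s..e} (\<lambda>t. u t - f t) + L1_norm {s..e} (\<lambda>t. v t - f t)) / (e - s)
    + L1_norm {s..e} (\<lambda>t. u' t - f' t) + L1_norm {s..e} (\<lambda>t. v' t - f' t)"
proof -
  have cu: "continuous_on {s..e} u" "continuous_on {s..e} v"
    using u v by (auto intro: C1_on_imp_continuous_on)
  have cu': "continuous_on {s..e} u'" "continuous_on {s..e} v'"
    using u v unfolding C1_on_def by auto
  have ad: "(\<lambda>t. \<bar>w t - f' t\<bar>) integrable_on {s..e}" if "continuous_on {s..e} w" for w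
  proof -
    have "(\<lambda>t. w t - f' t) absolutely_integrable_on {s..e}"
      using absolutely_integrable_continuous_real[OF that] f' by (rule set_integral_diff(1))
    then show ?thesis unfolding absolutely_integrable_on_def by simp
  qed
  have "integral {s..e} (\<lambda>t. \<bar>u t - v t\<bar>) \<le> integral {s..e} (\<lambda>t. \<bar>u t - f t\<bar> + \<bar>v t - f t\<bar>)"
    by (rule integral_le) (auto intro!: integrable_continuous_interval continuous_intros cu f)
  also have "\<dots> = L1_norm {s..e} (\<lambda>t. u t - f t) + L1_norm {s..e} (\<lambda>t. v t - f t)"
    unfolding L1_norm_def by (rule integral_add) (auto intro!: integrable_continuous_interval continuous_intros cu f)
  finally have "integral {s..e} (\<lambda>t. \<bar>u t - v t\<bar>) / (e - s)
      \<le> (L1_norm {s..e} (\<lambda>t. u t - f t) + L1_norm {s..e} (\<lambda>t. v t - f t)) / (e - s)"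
    using se by (simp add: divide_right_mono)
  moreover have "integral {s..e} (\<lambda>t. \<bar>u' t - v' t\<bar>) \<le> integral {s..e} (\<lambda>t. \<bar>u' t - f' t\<bar> + \<bar>v' t - f' t\<bar>)"
    by (intro integral_le integrable_add ad cu') (auto intro!: integrable_continuous_interval continuous_intros cu')
  moreover have "\<dots> = L1_norm {s..e} (\<lambda>t. u' t - f' t) + L1_norm {s..e} (\<lambda>t. v' t - f' t)"
    unfolding L1_norm_def by (intro integral_add ad cu')
  ultimately show ?thesis
    using C1_on_abs_le[OF C1_on_diff[OF u v] t se] by linarith
qed

lemma uniformly_Cauchy_onI_bound:
  fixes u :: "nat \<Rightarrow> 'a \<Rightarrow> real"
  assumes "\<And>m j t. t \<in> S \<Longrightarrow> \<bar>u m t - u j t\<bar> \<le> c m + c j" and "c \<longlonglongrightarrow> 0"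
  shows "uniformly_Cauchy_on S u"
proof (rule uniformly_Cauchy_onI)
  fix \<epsilon> :: real assume "0 < \<epsilon>"
  then have "eventually (\<lambda>m. c m < \<epsilon> / 2) sequentially"
    using assms(2) unfolding order_tendsto_iff by (meson half_gt_zero)
  then obtain N where N: "\<And>m. m \<ge> N \<Longrightarrow> c m < \<epsilon> / 2" by (auto simp: eventually_sequentially)
  have "dist (u m t) (u j t) < \<epsilon>" if "t \<in> S" "m \<ge> N" "j \<ge> N" for t m j
    using assms(1)[OF that(1), of m j] N[OF that(2)] N[OF that(3)] by (simp add: dist_real_def)
  then show "\<exists>N. \<forall>t\<in>S. \<forall>m\<ge>N. \<forall>j\<ge>N. dist (u m t) (u j t) < \<epsilon>" by blast
qed

text \<open>By \<open>C1_on_abs_diff_le_L1\<close> the approximants are uniformly Cauchy; their uniform limit is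
  continuous and at \<open>L\<^sup>1\<close>-distance zero from the continuous \<open>f\<close>, hence equal to \<open>f\<close>.\<close>
lemma W11_pointwise_approx:
  assumes W: "W11 {s..e} f f'" and se: "s < e"
  obtains u u' where "\<And>m. C1_on {s..e} (u m) (u' m)"
    and "\<And>t. t \<in> {s..e} \<Longrightarrow> (\<lambda>m. u m t) \<longlonglongrightarrow> f t"
    and "(\<lambda>m. L1_norm {s..e} (\<lambda>t. u' m t - f' t)) \<longlonglongrightarrow> 0"
proof -
  have f: "continuous_on {s..e} f" and f': "f' absolutely_integrable_on {s..e}"
    using W unfolding W11_def by auto
  obtain u u' where C: "\<And>m. C1_on {s..e} (u m) (u' m)"
    and lim: "(\<lambda>m. L1_norm {s..e} (\<lambda>t. u m t - f t) + L1_norm {s..e} (\<lambda>t. u' m t - f' t)) \<longlonglongrightarrow> 0"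
    using W unfolding W11_def by blast
  define A where "A = (\<lambda>m. L1_norm {s..e} (\<lambda>t. u m t - f t))"
  define B where "B = (\<lambda>m. L1_norm {s..e} (\<lambda>t. u' m t - f' t))"
  have AB: "(\<lambda>m. A m + B m) \<longlonglongrightarrow> 0" using lim by (simp add: A_def B_def)
  have "0 \<le> A m" "0 \<le> B m" for m
    unfolding A_def B_def by (rule L1_norm_nonneg)+
  then have A: "A \<longlonglongrightarrow> 0" and B: "B \<longlonglongrightarrow> 0"
    by (auto intro: tendsto_sandwich[of "\<lambda>_. 0" _ _ "\<lambda>m. A m + B m", OF _ _ tendsto_const AB])
  define c where "c m = A m / (e - s) + B m" for m
  have c: "c \<longlonglongrightarrow> 0" unfolding c_def by (rule tendsto_add_zero[OF tendsto_divide_zero[OF A] B])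
  have "\<bar>u m t - u j t\<bar> \<le> c m + c j" if "t \<in> {s..e}" for m j t
    using C1_on_abs_diff_le_L1[OF C[of m] C[of j] f f' se that]
    by (simp add: c_def A_def B_def add_divide_distrib)
  then have "uniformly_Cauchy_on {s..e} u" using c by (rule uniformly_Cauchy_onI_bound)
  then obtain g where g: "uniform_limit {s..e} u g sequentially"
    using Cauchy_uniformly_convergent unfolding uniformly_convergent_on_def by blast
  have "(\<lambda>m. u m t) \<longlonglongrightarrow> f t" if "t \<in> {s..e}" for t
  proof -
    have "g t = f t"
      using C A unfolding A_def
      by (intro uniform_limit_eq_if_L1_limit[OF g _ f _ se that]) (auto intro: C1_on_imp_continuous_on)
    then show ?thesis using tendsto_uniform_limitI[OF g that] by simp
  qed
  with C B show ?thesis using that unfolding B_def by blast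
qed

lemma W11_abs_diff_le:
  assumes W: "W11 {s..e} f f'" and "s < e" "s \<le> a" "a \<le> b" "b \<le> e"
  shows "\<bar>f b - f a\<bar> \<le> integral {a..b} (\<lambda>t. \<bar>f' t\<bar>)"
proof -
  obtain u u' where C: "\<And>m. C1_on {s..e} (u m) (u' m)"
    and conv: "\<And>t. t \<in> {s..e} \<Longrightarrow> (\<lambda>m. u m t) \<longlonglongrightarrow> f t"
    and B: "(\<lambda>m. L1_norm {s..e} (\<lambda>t. u' m t - f' t)) \<longlonglongrightarrow> 0"
    using W11_pointwise_approx[OF W \<open>s < e\<close>] by blast
  have sub: "{a..b} \<subseteq> {s..e}" using assms by auto
  have af': "f' absolutely_integrable_on {s..e}" using W unfolding W11_def by blast
  have le: "\<bar>u m b - u m a\<bar> \<le> integral {a..b} (\<lambda>t. \<bar>f' t\<bar>) + L1_norm {s..e} (\<lambda>t. u' m t - f' t)" for m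
  proof -
    have cu': "continuous_on {s..e} (u' m)" using C unfolding C1_on_def by blast
    have i0: "(\<lambda>t. \<bar>u' m t\<bar>) integrable_on {a..b}"
      using continuous_on_subset[OF cu' sub] by (intro integrable_continuous_interval continuous_on_rabs)
    have d: "(\<lambda>t. u' m t - f' t) absolutely_integrable_on {s..e}"
      using absolutely_integrable_continuous_real[OF cu'] af' by (rule set_integral_diff(1))
    have i1: "(\<lambda>t. \<bar>f' t\<bar>) integrable_on {a..b}"
      using absolutely_integrable_on_subinterval[OF af' sub] by (simp add: absolutely_integrable_on_def)
    have i2: "(\<lambda>t. \<bar>u' m t - f' t\<bar>) integrable_on {a..b}"
      using absolutely_integrable_on_subinterval[OF d sub] by (simp add: absolutely_integrable_on_def)
    have i3: "(\<lambda>t. \<bar>u' m t - f' t\<bar>) integrable_on {s..e}"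
      using d by (simp add: absolutely_integrable_on_def)
    have "\<bar>u m b - u m a\<bar> \<le> integral {a..b} (\<lambda>t. \<bar>u' m t\<bar>)"
      using C1_on_abs_diff_le[OF C1_on_subset[OF C sub]] assms by simp
    also have "\<dots> \<le> integral {a..b} (\<lambda>t. \<bar>f' t\<bar> + \<bar>u' m t - f' t\<bar>)"
      using i0 i1 i2 by (intro integral_le integrable_add) auto
    also have "\<dots> = integral {a..b} (\<lambda>t. \<bar>f' t\<bar>) + integral {a..b} (\<lambda>t. \<bar>u' m t - f' t\<bar>)"
      by (rule integral_add[OF i1 i2])
    also have "\<dots> \<le> integral {a..b} (\<lambda>t. \<bar>f' t\<bar>) + L1_norm {s..e} (\<lambda>t. u' m t - f' t)"
      unfolding L1_norm_def by (intro add_left_mono integral_subset_le[OF sub i2 i3]) simp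
    finally show ?thesis .
  qed
  have lim1: "(\<lambda>m. \<bar>u m b - u m a\<bar>) \<longlonglongrightarrow> \<bar>f b - f a\<bar>"
    using conv[of a] conv[of b] assms by (intro tendsto_rabs tendsto_diff) auto
  have lim2: "(\<lambda>m. integral {a..b} (\<lambda>t. \<bar>f' t\<bar>) + L1_norm {s..e} (\<lambda>t. u' m t - f' t))
      \<longlonglongrightarrow> integral {a..b} (\<lambda>t. \<bar>f' t\<bar>) + 0"
    using B by (rule tendsto_add[OF tendsto_const])
  have "\<bar>f b - f a\<bar> \<le> integral {a..b} (\<lambda>t. \<bar>f' t\<bar>) + 0"
    by (rule LIMSEQ_le[OF lim1 lim2]) (use le in blast)
  then show ?thesis by simp
qed

section \<open>Sums over arithmetic progressions\<close>

definition progression_points :: "real \<Rightarrow> real \<Rightarrow> int \<Rightarrow> int \<Rightarrow> int set" where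
  "progression_points s e a q = {n. s \<le> real_of_int n \<and> real_of_int n \<le> e \<and> [n = a] (mod q)}"

lemma finite_progression_points [simp]: "finite (progression_points s e a q)"
proof (rule finite_subset)
  show "progression_points s e a q \<subseteq> {\<lceil>s\<rceil>..\<lfloor>e\<rfloor>}"
    unfolding progression_points_def by (auto simp: ceiling_le_iff le_floor_iff)
qed simp

lemma cong_eq_if_abs_diff_less:
  fixes n m q :: int
  assumes "[n = m] (mod q)" "\<bar>real_of_int n - real_of_int m\<bar> < real_of_int q"
  shows "n = m"
proof (rule ccontr)
  assume "n \<noteq> m"
  moreover have "q dvd n - m" using assms(1) by (simp add: cong_iff_dvd_diff)
  ultimately have "\<bar>q\<bar> \<le> \<bar>n - m\<bar>" by (intro dvd_imp_le_int) auto
  then show False using assms(2) by linarith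
qed

lemma progression_points_short:
  assumes "e - s < q" "m \<in> progression_points s e a q" "n \<in> progression_points s e a q"
  shows "m = n"
  using assms by (intro cong_eq_if_abs_diff_less[of m n q])
    (auto simp: progression_points_def intro: cong_trans cong_sym)

lemma progression_point_in_period:
  fixes a q :: int
  assumes "q \<ge> 1"
  obtains n where "[n = a] (mod q)" "s \<le> real_of_int n" "real_of_int n < s + q"
proof
  define k where "k = \<lceil>(s - a) / q\<rceil>"
  have q: "0 < real_of_int q" using assms by simp
  have "(s - a) / q \<le> k" "k < (s - a) / q + 1" unfolding k_def by linarith+
  then have "s - a \<le> q * k" "q * k < s - a + q"
    using q by (simp_all add: field_simps)
  then show "s \<le> real_of_int (a + q * k)" "real_of_int (a + q * k) < s + q" by simp_all
  show "[a + q * k = a] (mod q)" by (simp add: cong_add_lcancel_0 cong_mult_self_left)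
qed

lemma sum_progression_points_short_approx:
  fixes f :: "real \<Rightarrow> real" and c d :: real and a q :: int
  assumes f: "continuous_on {c..d} f"
    and osc: "\<And>x y. x \<in> {c..d} \<Longrightarrow> y \<in> {c..d} \<Longrightarrow> \<bar>f y - f x\<bar> \<le> V"
    and M: "\<And>t. t \<in> {c..d} \<Longrightarrow> \<bar>f t\<bar> \<le> M" and cd: "c \<le> d" "d - c < q"
  shows "\<bar>(\<Sum>n\<in>progression_points c d a q. f n) - integral {c..d} f / q\<bar> \<le> V + M"
proof -
  have q0: "0 < real_of_int q" using cd by linarith
  have V0: "0 \<le> V" and M0: "0 \<le> M" using osc[of c c] M[of c] cd by auto
  show ?thesis
  proof (cases "progression_points c d a q = {}")
    case True
    have "norm (integral {c..d} f) \<le> integral {c..d} (\<lambda>t. M)"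
      by (rule integral_norm_bound_integral) (use f M in \<open>auto intro: integrable_continuous_interval\<close>)
    also have "\<dots> \<le> q * M" using cd M0 by (simp add: mult_right_mono)
    finally have "\<bar>integral {c..d} f\<bar> \<le> q * M" by simp
    then have "\<bar>integral {c..d} f / q\<bar> \<le> M" using q0 by (simp add: divide_le_eq mult.commute)
    then show ?thesis using True V0 by simp
  next
    case False
    then obtain n where n: "n \<in> progression_points c d a q" by blast
    then have "progression_points c d a q = {n}"
      using progression_points_short[OF cd(2)] by blast
    moreover have "\<bar>f n - integral {c..d} f / q\<bar> \<le> V + (1 - (d - c) / q) * M"
      using n cd by (intro abs_sub_integral_divide_le f osc M q0) (auto simp: progression_points_def)
    moreover have "0 \<le> (d - c) / q * M" using cd q0 M0 by simp
    ultimately show ?thesis by (simp add: algebra_simps)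
  qed
qed

lemma progression_points_insert:
  fixes c d :: real and n a q :: int
  assumes "[n = a] (mod q)" "c \<le> real_of_int n" "real_of_int n < c + q" "c + q \<le> d"
  shows "progression_points c d a q = insert n (progression_points (c + q) d a q)"
    and "n \<notin> progression_points (c + q) d a q"
proof -
  show "progression_points c d a q = insert n (progression_points (c + q) d a q)"
  proof (intro equalityI subsetI)
    fix m assume m: "m \<in> progression_points c d a q"
    show "m \<in> insert n (progression_points (c + q) d a q)"
    proof (cases "real_of_int m < c + q")
      case True
      then have "m = n" using m assms
        by (intro cong_eq_if_abs_diff_less[of m n q]) (auto simp: progression_points_def intro: cong_trans cong_sym)
      then show ?thesis by simp
    qed (use m in \<open>auto simp: progression_points_def\<close>)
  qed (use assms in \<open>auto simp: progression_points_def\<close>)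
  show "n \<notin> progression_points (c + q) d a q" using assms(3) by (simp add: progression_points_def)
qed

lemma abs_diff_le_integral_subinterval:
  fixes f g :: "real \<Rightarrow> real"
  assumes g: "g integrable_on {s..e}" "\<And>t. t \<in> {s..e} \<Longrightarrow> 0 \<le> g t"
    and var: "\<And>a b. s \<le> a \<Longrightarrow> a \<le> b \<Longrightarrow> b \<le> e \<Longrightarrow> \<bar>f b - f a\<bar> \<le> integral {a..b} g"
    and "s \<le> c" "d \<le> e" "x \<in> {c..d}" "y \<in> {c..d}"
  shows "\<bar>f y - f x\<bar> \<le> integral {c..d} g"
proof -
  have "\<bar>f y - f x\<bar> \<le> integral {min x y..max x y} g"
    using var[of "min x y" "max x y"] assms(4-) by (cases "x \<le> y") (auto simp: abs_minus_commute)
  also have "\<dots> \<le> integral {c..d} g"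
    using assms by (intro integral_subset_le integrable_on_subinterval[OF g(1)]) auto
  finally show ?thesis .
qed

text \<open>Split \<open>[s, e]\<close> into tiles of length \<open>q\<close>, each containing exactly one point of the
  progression, and a last shorter tile containing at most one; on each tile compare the point
  value with the average over the tile (\<open>abs_sub_integral_divide_le\<close>).\<close>
lemma sum_progression_points_approx:
  fixes f g :: "real \<Rightarrow> real" and a q :: int
  assumes q: "q \<ge> 1" and f: "continuous_on {s..e} f"
    and g: "g integrable_on {s..e}" "\<And>t. t \<in> {s..e} \<Longrightarrow> 0 \<le> g t"
    and var: "\<And>a b. s \<le> a \<Longrightarrow> a \<le> b \<Longrightarrow> b \<le> e \<Longrightarrow> \<bar>f b - f a\<bar> \<le> integral {a..b} g"
    and M: "\<And>t. t \<in> {s..e} \<Longrightarrow> \<bar>f t\<bar> \<le> M" and se: "s \<le> e"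
  shows "\<bar>(\<Sum>n\<in>progression_points s e a q. f n) - integral {s..e} f / q\<bar>
    \<le> integral {s..e} g + M"
proof -
  have q0: "0 < real_of_int q" using q by simp
  have fi: "f integrable_on {c..d}" if "s \<le> c" "d \<le> e" for c d
    by (rule integrable_continuous_interval) (use continuous_on_subset[OF f] that in auto)
  have gi: "g integrable_on {c..d}" if "s \<le> c" "d \<le> e" for c d
    by (rule integrable_on_subinterval[OF g(1)]) (use that in auto)
  have osc: "\<bar>f y - f x\<bar> \<le> integral {c..d} g"
    if "s \<le> c" "d \<le> e" "x \<in> {c..d}" "y \<in> {c..d}" for c d x y
    using abs_diff_le_integral_subinterval[OF g var that] .
  obtain N :: nat where "e - s < N * q"
    using reals_Archimedean2[of "(e - s) / q"] q0 by (auto simp: divide_less_eq)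
  moreover have "\<bar>(\<Sum>n\<in>progression_points c e a q. f n) - integral {c..e} f / q\<bar>
      \<le> integral {c..e} g + M" if "s \<le> c" "c \<le> e" "e - c < N * q" for c
    using that
  proof (induction N arbitrary: c)
    case 0
    then show ?case using q0 by simp
  next
    case (Suc N)
    show ?case
    proof (cases "e - c < q")
      case True
      then show ?thesis
        using Suc.prems by (intro sum_progression_points_short_approx osc M continuous_on_subset[OF f]) auto
    next
      case False
      obtain n0 where n0: "[n0 = a] (mod q)" "c \<le> real_of_int n0" "real_of_int n0 < c + q"
        using progression_point_in_period[OF q] .
      have "(\<Sum>n\<in>progression_points c e a q. f n) = f n0 + (\<Sum>n\<in>progression_points (c + q) e a q. f n)"
        using progression_points_insert[OF n0] False by simp
      moreover have "\<bar>f n0 - integral {c..c + q} f / q\<bar> \<le> integral {c..c + q} g"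
        using abs_sub_integral_divide_le[of c "c + q" f _ M n0 q] n0 Suc.prems False q0
        by (simp add: osc M continuous_on_subset[OF f])
      moreover have "\<bar>(\<Sum>n\<in>progression_points (c + q) e a q. f n) - integral {c + q..e} f / q\<bar>
          \<le> integral {c + q..e} g + M"
        using Suc.prems False q0 by (intro Suc.IH) (auto simp: algebra_simps)
      moreover have "integral {c..c + q} f + integral {c + q..e} f = integral {c..e} f"
        using Suc.prems False q0 by (intro Henstock_Kurzweil_Integration.integral_combine fi) auto
      moreover have "integral {c..c + q} g + integral {c + q..e} g = integral {c..e} g"
        using Suc.prems False q0 by (intro Henstock_Kurzweil_Integration.integral_combine gi) auto
      ultimately show ?thesis by (smt (verit) add_divide_distrib)
    qed
  qed
  ultimately show ?thesis using se by simp
qed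

lemma W11_sum_progression_points_approx:
  assumes W: "W11 {s..e} f f'" and "s < e" and q: "q \<ge> 1"
  shows "\<bar>(\<Sum>n\<in>progression_points s e a q. f n) - integral {s..e} f / q\<bar>
    \<le> sup_norm {s..e} f + L1_norm {s..e} f'"
proof -
  have f: "continuous_on {s..e} f" and f': "f' absolutely_integrable_on {s..e}"
    using W unfolding W11_def by auto
  have "bounded (f ` {s..e})"
    by (rule compact_imp_bounded[OF compact_continuous_image[OF f compact_Icc]])
  then have "bdd_above ((\<lambda>t. \<bar>f t\<bar>) ` {s..e})"
    by (auto simp: bounded_iff bdd_above_def)
  then have "\<bar>f t\<bar> \<le> sup_norm {s..e} f" if "t \<in> {s..e}" for t
    unfolding sup_norm_def using that by (rule cSUP_upper2) simp
  then have "\<bar>(\<Sum>n\<in>progression_points s e a q. f n) - integral {s..e} f / q\<bar>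
      \<le> integral {s..e} (\<lambda>t. \<bar>f' t\<bar>) + sup_norm {s..e} f"
    using W11_abs_diff_le[OF W \<open>s < e\<close>] f' \<open>s < e\<close>
    by (intro sum_progression_points_approx[OF q f]) (auto simp: absolutely_integrable_on_def)
  then show ?thesis by (simp add: L1_norm_def add.commute)
qed

lemma cong_and_dvd_iff_cong_mult:
  fixes L k :: nat and l :: int
  assumes "coprime L k"
  obtains a where "\<And>n. [n = l] (mod int k) \<and> int L dvd n \<longleftrightarrow> [n = a] (mod int k * int L)"
proof -
  obtain v where v: "[int L * v = 1] (mod int k)"
    using cong_solve_coprime_int[of "int L" "int k"] assms by auto
  define a where "a = int L * v * l"
  have al: "[a = l] (mod int k)"
    using cong_mult[OF v cong_refl[of l]] by (simp add: a_def)
  have La: "int L dvd a" by (simp add: a_def)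
  have "[n = l] (mod int k) \<and> int L dvd n \<longleftrightarrow> [n = a] (mod int k * int L)" for n
  proof -
    have "[n = a] (mod int L) \<longleftrightarrow> int L dvd n"
      using La by (simp add: cong_iff_dvd_diff dvd_diff_left_iff)
    moreover have "coprime (int k) (int L)" using assms by (simp add: coprime_commute)
    ultimately show ?thesis
      using al by (metis cong_modulus_mult coprime_cong_mult mult.commute cong_sym cong_trans)
  qed
  then show ?thesis using that by blast
qed

lemma W11_sum_progression_points_dvd_approx:
  fixes L k :: nat
  assumes W: "W11 {s..e} f f'" and "s < e" "k \<ge> 1" "L \<ge> 1" "coprime L k"
  shows "\<bar>(\<Sum>n\<in>{n\<in>progression_points s e l (int k). int L dvd n}. f n) - integral {s..e} f / (k * L)\<bar>
    \<le> sup_norm {s..e} f + L1_norm {s..e} f'"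
proof -
  obtain a where a: "\<And>n. [n = l] (mod int k) \<and> int L dvd n \<longleftrightarrow> [n = a] (mod int k * int L)"
    using cong_and_dvd_iff_cong_mult[OF assms(5)] by blast
  have "{n\<in>progression_points s e l (int k). int L dvd n} = progression_points s e a (int k * int L)"
    unfolding progression_points_def using a by blast
  moreover have "int k * int L \<ge> 1"
    by (metis mult_le_mono[OF assms(3,4)] mult_1 of_nat_1 of_nat_le_iff of_nat_mult)
  ultimately show ?thesis
    using W11_sum_progression_points_approx[OF W \<open>s < e\<close>, of "int k * int L" a] by simp
qed

section \<open>The Moebius function\<close>

lemma squarefree_imp_pos: "squarefree (n :: nat) \<Longrightarrow> 0 < n"
  by (rule gr0I) simp

lemma moebius_mu_squared: "squarefree n \<Longrightarrow> real_of_int (moebius_mu n) ^ 2 = 1"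
  unfolding moebius_mu_def by (simp flip: power_mult power_mult_distrib)

lemma moebius_mu_eq_0: "\<not> squarefree n \<Longrightarrow> moebius_mu n = 0"
  unfolding moebius_mu_def by simp

lemma abs_moebius_mu: "squarefree n \<Longrightarrow> \<bar>real_of_int (moebius_mu n)\<bar> = 1"
  unfolding moebius_mu_def by (simp add: abs_mult)

lemma abs_moebius_mu_le: "\<bar>real_of_int (moebius_mu n)\<bar> \<le> 1"
  unfolding moebius_mu_def by (simp add: abs_mult)

lemma moebius_mu_prime_mult:
  fixes p t :: nat
  assumes p: "prime p" and t: "squarefree t" and "\<not> p dvd t"
  shows "moebius_mu (p * t) = - moebius_mu t"
proof -
  have cop: "coprime p t" using p assms(3) by (rule prime_imp_coprime)
  have "squarefree (p * t)" by (rule squarefree_mult_coprime[OF cop squarefree_prime[OF p] t])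
  moreover have "prime_factors (p * t) = insert p (prime_factors t)"
    using prime_factors_product[of p t] p squarefree_imp_pos[OF t] by (simp add: prime_prime_factors prime_gt_0_nat)
  moreover have "p \<notin> prime_factors t" using assms(3) by (auto simp: in_prime_factors_iff)
  ultimately show ?thesis using t unfolding moebius_mu_def by simp
qed

lemma divisors_prime_mult:
  fixes p m :: nat
  assumes p: "prime p" and "\<not> p dvd m"
  shows "{t. t dvd p * m} = {t. t dvd m} \<union> (\<lambda>t. p * t) ` {t. t dvd m}"
proof safe
  fix t assume t: "t dvd p * m" "t \<notin> (\<lambda>t. p * t) ` {t. t dvd m}"
  show "t dvd m"
  proof (cases "p dvd t")
    case True
    then obtain s where s: "t = p * s" by blast
    then have "s dvd m" using t(1) p by (auto simp: prime_gt_0_nat)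
    then show ?thesis using t(2) s by blast
  next
    case False
    then have "coprime t p" using p by (simp add: prime_imp_coprime coprime_commute)
    then show ?thesis using t(1) by (metis coprime_dvd_mult_right_iff)
  qed
qed auto

lemma sum_moebius_mu_divisors:
  fixes m :: nat
  assumes "squarefree m"
  shows "(\<Sum>t\<in>{t. t dvd m}. real_of_int (moebius_mu t)) = (if m = 1 then 1 else 0)"
proof (cases "m = 1")
  case True
  then show ?thesis by (simp add: moebius_mu_def)
next
  case False
  obtain p where p: "prime p" "p dvd m" using prime_factor_nat[OF False] by blast
  then obtain m' where m': "m = p * m'" by blast
  have sq: "squarefree m'" using assms m' squarefree_multD(2) by blast
  have nd: "\<not> p dvd m'"
  proof
    assume "p dvd m'"
    then have "p ^ 2 dvd m" using m' by (simp add: power2_eq_square)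
    then show False using assms p by (metis not_prime_unit squarefree_def)
  qed
  have inj: "inj_on (\<lambda>t. p * t) {t. t dvd m'}" using p by (auto simp: inj_on_def prime_gt_0_nat)
  have "(\<Sum>t\<in>{t. t dvd m}. real_of_int (moebius_mu t))
      = (\<Sum>t\<in>{t. t dvd m'}. real_of_int (moebius_mu t))
        + (\<Sum>t\<in>{t. t dvd m'}. real_of_int (moebius_mu (p * t)))"
    unfolding m' divisors_prime_mult[OF p(1) nd]
    using squarefree_imp_pos[OF sq] nd by (subst sum.union_disjoint) (auto simp: sum.reindex[OF inj] dest: dvd_mult_left)
  also have "(\<Sum>t\<in>{t. t dvd m'}. real_of_int (moebius_mu (p * t)))
      = - (\<Sum>t\<in>{t. t dvd m'}. real_of_int (moebius_mu t))"
  proof -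
    have "moebius_mu (p * t) = - moebius_mu t" if "t dvd m'" for t
      using that sq nd squarefree_mono[OF that] by (intro moebius_mu_prime_mult[OF p(1)])
        (auto dest: dvd_trans)
    then show ?thesis by (simp add: sum_negf[symmetric])
  qed
  finally show ?thesis using False by simp
qed

lemma sum_divisors_div:
  fixes g :: "nat \<Rightarrow> real"
  assumes "m > 0"
  shows "(\<Sum>s\<in>{s. s dvd m}. g (m div s)) = (\<Sum>t\<in>{t. t dvd m}. g t)"
  by (rule sum.reindex_bij_witness[of _ "\<lambda>t. m div t" "\<lambda>t. m div t"])
     (use assms in \<open>auto elim!: dvdE simp: div_mult_self1_is_m\<close>)

section \<open>Selberg's sieve\<close>

locale selberg_sieve =
  fixes D :: "nat set"
  assumes finite_D: "finite D" and one_in_D: "1 \<in> D"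
    and D_dvd_closed: "d \<in> D \<Longrightarrow> e dvd d \<Longrightarrow> e \<in> D"
    and squarefree_D: "d \<in> D \<Longrightarrow> squarefree d"
begin

definition G :: real where "G = (\<Sum>d\<in>D. 1 / real (totient d))"

definition H :: real where "H = (\<Sum>d\<in>D. real (divisor_sigma d) / real (totient d))"

text \<open>Selberg's optimal weights \<open>\<lambda>(d) = d \<Sum>e. [d | e] \<mu>(e/d) y(e)\<close>: Moebius inversion turns
  the quadratic form \<open>\<Sum>d\<^sub>1 d\<^sub>2. \<lambda>(d\<^sub>1) \<lambda>(d\<^sub>2) / lcm(d\<^sub>1,d\<^sub>2)\<close> into \<open>\<Sum>e. \<phi>(e) y(e)\<^sup>2\<close>, and this
  choice of \<open>y\<close> minimises it subject to \<open>\<lambda>(1) = 1\<close>.\<close>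
definition selberg_y :: "nat \<Rightarrow> real" where
  "selberg_y e = real_of_int (moebius_mu e) / (real (totient e) * G)"

definition selberg_lambda :: "nat \<Rightarrow> real" where
  "selberg_lambda d =
     real d * (\<Sum>e\<in>D. if d dvd e then real_of_int (moebius_mu (e div d)) * selberg_y e else 0)"

lemma pos_D: "d \<in> D \<Longrightarrow> 0 < d"
  using squarefree_D squarefree_imp_pos by blast

lemma G_ge_1: "1 \<le> G"
proof -
  have "1 / real (totient 1) \<le> G"
    unfolding G_def by (rule member_le_sum) (use one_in_D finite_D in auto)
  then show ?thesis by simp
qed

lemma selberg_lambda_1: "selberg_lambda 1 = 1"
proof -
  have "selberg_lambda 1 = (\<Sum>e\<in>D. real_of_int (moebius_mu e) * selberg_y e)"
    by (simp add: selberg_lambda_def)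
  also have "\<dots> = (\<Sum>e\<in>D. 1 / real (totient e) / G)"
  proof (intro sum.cong refl)
    fix e assume "e \<in> D"
    then have "real_of_int (moebius_mu e) * real_of_int (moebius_mu e) = 1"
      using moebius_mu_squared squarefree_D by (simp add: power2_eq_square)
    then show "real_of_int (moebius_mu e) * selberg_y e = 1 / real (totient e) / G"
      by (simp add: selberg_y_def field_simps)
  qed
  also have "\<dots> = G / G" unfolding G_def by (rule sum_divide_distrib[symmetric])
  finally show ?thesis using G_ge_1 by simp
qed

lemma sum_moebius_mu_between:
  assumes e: "e \<in> D" and e': "e' \<in> D"
  shows "(\<Sum>d\<in>D. if e dvd d \<and> d dvd e' then real_of_int (moebius_mu (e' div d)) else 0)
    = (if e = e' then 1 else 0)"
proof -
  have "(\<Sum>d\<in>D. if e dvd d \<and> d dvd e' then real_of_int (moebius_mu (e' div d)) else 0)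
      = (\<Sum>d\<in>{d\<in>D. e dvd d \<and> d dvd e'}. real_of_int (moebius_mu (e' div d)))"
    using finite_D by (simp add: sum.inter_filter)
  also have "\<dots> = (if e = e' then 1 else 0)"
  proof (cases "e dvd e'")
    case False
    hence em: "{d\<in>D. e dvd d \<and> d dvd e'} = {}" by (auto dest: dvd_trans)
    have "e \<noteq> e'" using False by auto
    then show ?thesis unfolding em by simp
  next
    case True
    then obtain m where m: "e' = e * m" by blast
    have e0: "e > 0" using pos_D e by simp
    have m0: "m > 0" using pos_D[OF e'] m by (auto intro: gr0I)
    have sqm: "squarefree m" using squarefree_D[OF e'] m squarefree_multD(2) by blast
    have set: "{d\<in>D. e dvd d \<and> d dvd e'} = (\<lambda>s. e * s) ` {s. s dvd m}"
    proof safe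
      fix d assume d: "d \<in> D" "e dvd d" "d dvd e'"
      then obtain s where s: "d = e * s" by blast
      hence "s dvd m" using d(3) m e0 by simp
      thus "d \<in> (\<lambda>s. e * s) ` {s. s dvd m}" using s by blast
    next
      fix s assume "s dvd m"
      thus "e * s \<in> D" using D_dvd_closed[OF e'] m by simp
    qed (use m in auto)
    have inj: "inj_on (\<lambda>s. e * s) {s. s dvd m}" using e0 by (auto simp: inj_on_def)
    have "(\<Sum>d\<in>{d\<in>D. e dvd d \<and> d dvd e'}. real_of_int (moebius_mu (e' div d)))
        = (\<Sum>s\<in>{s. s dvd m}. real_of_int (moebius_mu (e' div (e * s))))"
      unfolding set using sum.reindex[OF inj] by simp
    also have "\<dots> = (\<Sum>s\<in>{s. s dvd m}. real_of_int (moebius_mu (m div s)))"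
      using e0 m by simp
    also have "\<dots> = (\<Sum>t\<in>{t. t dvd m}. real_of_int (moebius_mu t))"
      by (rule sum_divisors_div[OF m0])
    also have "\<dots> = (if m = 1 then 1 else 0)" by (rule sum_moebius_mu_divisors[OF sqm])
    also have "(m = 1) = (e = e')" using m e0 by auto
    finally show ?thesis .
  qed
  finally show ?thesis .
qed

lemma sum_selberg_lambda_multiples:
  assumes e: "e \<in> D"
  shows "(\<Sum>d\<in>D. if e dvd d then selberg_lambda d / real d else 0) = selberg_y e"
proof -
  have "(\<Sum>d\<in>D. if e dvd d then selberg_lambda d / real d else 0) = (\<Sum>d\<in>D. \<Sum>e'\<in>D.
      selberg_y e' * (if e dvd d \<and> d dvd e' then real_of_int (moebius_mu (e' div d)) else 0))"
    using pos_D by (intro sum.cong refl) (auto simp: selberg_lambda_def intro!: sum.cong)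
  also have "\<dots> = (\<Sum>e'\<in>D. selberg_y e' * (if e = e' then 1 else 0))"
    by (subst sum.swap) (simp add: sum_distrib_left[symmetric] sum_moebius_mu_between[OF e])
  also have "\<dots> = selberg_y e" using e finite_D by (simp add: if_distrib cong: if_cong)
  finally show ?thesis .
qed

lemma gcd_eq_sum_totient:
  assumes "d1 \<in> D" "d2 \<in> D"
  shows "real (gcd d1 d2) = (\<Sum>e\<in>D. if e dvd d1 \<and> e dvd d2 then real (totient e) else 0)"
proof -
  have "{e. e dvd gcd d1 d2} = {e\<in>D. e dvd d1 \<and> e dvd d2}" using D_dvd_closed[OF assms(1)] by auto
  then have "real (gcd d1 d2) = (\<Sum>e\<in>{e\<in>D. e dvd d1 \<and> e dvd d2}. real (totient e))"
    using totient_divisor_sum[of "gcd d1 d2"] by (metis of_nat_sum)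
  then show ?thesis using finite_D by (simp add: sum.inter_filter)
qed

lemma selberg_quadratic_form:
  "(\<Sum>d1\<in>D. \<Sum>d2\<in>D. selberg_lambda d1 * selberg_lambda d2 / real (lcm d1 d2)) = 1 / G"
proof -
  define a where "a e d = (if e dvd d then selberg_lambda d / real d else 0)" for e d
  have "(\<Sum>d1\<in>D. \<Sum>d2\<in>D. selberg_lambda d1 * selberg_lambda d2 / real (lcm d1 d2))
      = (\<Sum>d1\<in>D. \<Sum>d2\<in>D. \<Sum>e\<in>D. real (totient e) * (a e d1 * a e d2))"
  proof (rule sum.cong[OF refl], rule sum.cong[OF refl])
    fix d1 d2 assume d: "d1 \<in> D" "d2 \<in> D"
    have "real d1 * real d2 = real (gcd d1 d2) * real (lcm d1 d2)"
      by (metis of_nat_mult prod_gcd_lcm_nat)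
    then have "selberg_lambda d1 * selberg_lambda d2 / real (lcm d1 d2)
        = selberg_lambda d1 / real d1 * (selberg_lambda d2 / real d2) * real (gcd d1 d2)"
      using pos_D[OF d(1)] pos_D[OF d(2)] by (simp add: field_simps)
    also have "\<dots> = (\<Sum>e\<in>D. real (totient e) * (a e d1 * a e d2))"
      unfolding gcd_eq_sum_totient[OF d] sum_distrib_left a_def by (intro sum.cong refl) auto
    finally show "selberg_lambda d1 * selberg_lambda d2 / real (lcm d1 d2)
        = (\<Sum>e\<in>D. real (totient e) * (a e d1 * a e d2))" .
  qed
  also have "\<dots> = (\<Sum>d1\<in>D. \<Sum>e\<in>D. \<Sum>d2\<in>D. real (totient e) * (a e d1 * a e d2))"
    by (rule sum.cong[OF refl]) (rule sum.swap)
  also have "\<dots> = (\<Sum>e\<in>D. \<Sum>d1\<in>D. \<Sum>d2\<in>D. real (totient e) * (a e d1 * a e d2))"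
    by (rule sum.swap)
  also have "\<dots> = (\<Sum>e\<in>D. real (totient e) * ((\<Sum>d1\<in>D. a e d1) * (\<Sum>d2\<in>D. a e d2)))"
    unfolding sum_product unfolding sum_distrib_left ..
  also have "\<dots> = (\<Sum>e\<in>D. 1 / real (totient e) / G ^ 2)"
  proof (rule sum.cong[OF refl])
    fix e assume e: "e \<in> D"
    have "(\<Sum>d\<in>D. a e d) = selberg_y e"
      unfolding a_def by (rule sum_selberg_lambda_multiples[OF e])
    then have "real (totient e) * ((\<Sum>d1\<in>D. a e d1) * (\<Sum>d2\<in>D. a e d2))
        = real (totient e) * (selberg_y e * selberg_y e)" by simp
    also have "\<dots> = 1 / real (totient e) / G ^ 2"
      using moebius_mu_squared[OF squarefree_D[OF e]] pos_D[OF e] G_ge_1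
      by (simp add: selberg_y_def field_simps power2_eq_square)
    finally show "real (totient e) * ((\<Sum>d1\<in>D. a e d1) * (\<Sum>d2\<in>D. a e d2))
        = 1 / real (totient e) / G ^ 2" .
  qed
  also have "\<dots> = (\<Sum>e\<in>D. 1 / real (totient e)) / G ^ 2"
    by (rule sum_divide_distrib[symmetric])
  also have "\<dots> = 1 / G" using G_ge_1 by (simp add: G_def[symmetric] power2_eq_square)
  finally show ?thesis .
qed

lemma sum_abs_selberg_lambda_le: "(\<Sum>d\<in>D. \<bar>selberg_lambda d\<bar>) \<le> H / G"
proof -
  have abs_y: "\<bar>selberg_y e\<bar> = 1 / real (totient e) / G" if "e \<in> D" for e
    using abs_moebius_mu[OF squarefree_D[OF that]] G_ge_1 unfolding selberg_y_def
    by (simp add: abs_mult abs_div)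
  have "(\<Sum>d\<in>D. \<bar>selberg_lambda d\<bar>) \<le> (\<Sum>d\<in>D. \<Sum>e\<in>D. if d dvd e then real d * \<bar>selberg_y e\<bar> else 0)"
  proof (rule sum_mono)
    fix d
    have "\<bar>selberg_lambda d\<bar>
        \<le> real d * (\<Sum>e\<in>D. \<bar>if d dvd e then real_of_int (moebius_mu (e div d)) * selberg_y e else 0\<bar>)"
      unfolding selberg_lambda_def abs_mult by (simp add: mult_left_mono sum_abs)
    also have "\<dots> \<le> real d * (\<Sum>e\<in>D. if d dvd e then \<bar>selberg_y e\<bar> else 0)"
    proof (intro mult_left_mono sum_mono)
      fix e
      have "\<bar>real_of_int (moebius_mu (e div d))\<bar> * \<bar>selberg_y e\<bar> \<le> 1 * \<bar>selberg_y e\<bar>"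
        by (rule mult_right_mono[OF abs_moebius_mu_le]) simp
      then show "\<bar>if d dvd e then real_of_int (moebius_mu (e div d)) * selberg_y e else 0\<bar>
          \<le> (if d dvd e then \<bar>selberg_y e\<bar> else 0)"
        by (simp add: abs_mult)
    qed simp
    also have "\<dots> = (\<Sum>e\<in>D. if d dvd e then real d * \<bar>selberg_y e\<bar> else 0)"
      unfolding sum_distrib_left by (intro sum.cong refl) simp
    finally show "\<bar>selberg_lambda d\<bar> \<le> (\<Sum>e\<in>D. if d dvd e then real d * \<bar>selberg_y e\<bar> else 0)" .
  qed
  also have "\<dots> = (\<Sum>e\<in>D. \<Sum>d\<in>D. if d dvd e then real d * \<bar>selberg_y e\<bar> else 0)"
    by (rule sum.swap)
  also have "\<dots> = (\<Sum>e\<in>D. real (divisor_sigma e) / real (totient e) / G)"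
  proof (intro sum.cong refl)
    fix e assume e: "e \<in> D"
    have "{d. d dvd e} = {d\<in>D. d dvd e}" using D_dvd_closed[OF e] by auto
    then have "real (divisor_sigma e) = (\<Sum>d\<in>D. if d dvd e then real d else 0)"
      unfolding divisor_sigma_def of_nat_sum using finite_D by (simp add: sum.inter_filter)
    moreover have "(\<Sum>d\<in>D. if d dvd e then real d * \<bar>selberg_y e\<bar> else 0)
        = (\<Sum>d\<in>D. if d dvd e then real d else 0) * \<bar>selberg_y e\<bar>"
      unfolding sum_distrib_right by (intro sum.cong refl) simp
    ultimately show "(\<Sum>d\<in>D. if d dvd e then real d * \<bar>selberg_y e\<bar> else 0)
        = real (divisor_sigma e) / real (totient e) / G"
      by (simp add: abs_y[OF e])
  qed
  also have "\<dots> = H / G" unfolding H_def by (simp add: sum_divide_distrib)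
  finally show ?thesis .
qed

end

lemma sum_weighted_divisor_sum_squared:
  fixes w :: "int \<Rightarrow> real" and l :: "nat \<Rightarrow> real"
  assumes "finite A"
  shows "(\<Sum>n\<in>A. w n * (\<Sum>d\<in>D. if int d dvd n then l d else 0)\<^sup>2)
    = (\<Sum>d1\<in>D. \<Sum>d2\<in>D. l d1 * l d2 * (\<Sum>n\<in>{n\<in>A. int (lcm d1 d2) dvd n}. w n))"
proof -
  have lcm_dvd: "int (lcm d1 d2) dvd n \<longleftrightarrow> int d1 dvd n \<and> int d2 dvd n" for d1 d2 :: nat and n :: int
    by (metis lcm_int_int_eq lcm_least_iff)
  have "w n * (\<Sum>d\<in>D. if int d dvd n then l d else 0)\<^sup>2
      = (\<Sum>d1\<in>D. \<Sum>d2\<in>D. w n * ((if int d1 dvd n then l d1 else 0) * (if int d2 dvd n then l d2 else 0)))"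
    for n
    unfolding power2_eq_square unfolding sum_product unfolding sum_distrib_left ..
  also have "\<dots> n = (\<Sum>d1\<in>D. \<Sum>d2\<in>D. l d1 * l d2 * (if int (lcm d1 d2) dvd n then w n else 0))" for n
    by (intro sum.cong refl) (simp add: lcm_dvd)
  finally have "(\<Sum>n\<in>A. w n * (\<Sum>d\<in>D. if int d dvd n then l d else 0)\<^sup>2)
      = (\<Sum>n\<in>A. \<Sum>d1\<in>D. \<Sum>d2\<in>D. l d1 * l d2 * (if int (lcm d1 d2) dvd n then w n else 0))"
    by simp
  also have "\<dots> = (\<Sum>d1\<in>D. \<Sum>d2\<in>D. \<Sum>n\<in>A. l d1 * l d2 * (if int (lcm d1 d2) dvd n then w n else 0))"
    by (subst sum.swap) (rule sum.cong[OF refl], rule sum.swap)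
  also have "\<dots> = (\<Sum>d1\<in>D. \<Sum>d2\<in>D. l d1 * l d2 * (\<Sum>n\<in>{n\<in>A. int (lcm d1 d2) dvd n}. w n))"
    using assms by (simp add: sum_distrib_left sum.inter_filter)
  finally show ?thesis .
qed

context selberg_sieve
begin

lemma sum_selberg_lambda_dvd_coprime:
  assumes "\<And>d. d \<in> D \<Longrightarrow> d dvd P" and "coprime n (int P)"
  shows "(\<Sum>d\<in>D. if int d dvd n then selberg_lambda d else 0) = 1"
proof -
  have "int d dvd n \<longleftrightarrow> d = 1" if "d \<in> D" for d
  proof
    assume "int d dvd n"
    moreover have "int d dvd int P" using assms(1)[OF that] by simp
    ultimately show "d = 1" using coprime_common_divisor[OF assms(2)] by fastforce
  qed simp
  then have "(\<Sum>d\<in>D. if int d dvd n then selberg_lambda d else 0)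
      = (\<Sum>d\<in>D. if d = 1 then selberg_lambda d else 0)"
    by (intro sum.cong) auto
  then show ?thesis using finite_D one_in_D selberg_lambda_1 by simp
qed

theorem selberg_upper_bound:
  fixes A :: "int set" and w :: "int \<Rightarrow> real" and P :: nat
  assumes A: "finite A" and w: "\<And>n. n \<in> A \<Longrightarrow> 0 \<le> w n" and P: "\<And>d. d \<in> D \<Longrightarrow> d dvd P"
    and R: "\<And>d1 d2. d1 \<in> D \<Longrightarrow> d2 \<in> D \<Longrightarrow>
      \<bar>(\<Sum>n\<in>{n\<in>A. int (lcm d1 d2) dvd n}. w n) - X / real (lcm d1 d2)\<bar> \<le> R"
  shows "(\<Sum>n\<in>{n\<in>A. coprime n (int P)}. w n) \<le> X / G + (H / G)\<^sup>2 * R"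
proof -
  define \<Lambda> where "\<Lambda> n = (\<Sum>d\<in>D. if int d dvd n then selberg_lambda d else 0)" for n
  define T where "T d1 d2 = (\<Sum>n\<in>{n\<in>A. int (lcm d1 d2) dvd n}. w n)" for d1 d2
  have R0: "0 \<le> R" using R[OF one_in_D one_in_D] by linarith
  have "(\<Sum>n\<in>{n\<in>A. coprime n (int P)}. w n) = (\<Sum>n\<in>{n\<in>A. coprime n (int P)}. w n * (\<Lambda> n)\<^sup>2)"
    using sum_selberg_lambda_dvd_coprime[OF P] by (simp add: \<Lambda>_def)
  also have "\<dots> \<le> (\<Sum>n\<in>A. w n * (\<Lambda> n)\<^sup>2)"
    using A w by (intro sum_mono2) auto
  also have "\<dots> = (\<Sum>d1\<in>D. \<Sum>d2\<in>D. selberg_lambda d1 * selberg_lambda d2 * T d1 d2)"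
    unfolding \<Lambda>_def T_def by (rule sum_weighted_divisor_sum_squared[OF A])
  also have "\<dots> = X * (\<Sum>d1\<in>D. \<Sum>d2\<in>D. selberg_lambda d1 * selberg_lambda d2 / real (lcm d1 d2))
      + (\<Sum>d1\<in>D. \<Sum>d2\<in>D. selberg_lambda d1 * selberg_lambda d2 * (T d1 d2 - X / real (lcm d1 d2)))"
  proof -
    have "selberg_lambda d1 * selberg_lambda d2 * T d1 d2
        = X * (selberg_lambda d1 * selberg_lambda d2 / real (lcm d1 d2))
          + selberg_lambda d1 * selberg_lambda d2 * (T d1 d2 - X / real (lcm d1 d2))" for d1 d2
      by (simp add: algebra_simps)
    then show ?thesis unfolding sum_distrib_left by (simp only: sum.distrib)
  qed
  also have "\<dots> \<le> X / G + (\<Sum>d1\<in>D. \<Sum>d2\<in>D. \<bar>selberg_lambda d1\<bar> * \<bar>selberg_lambda d2\<bar> * R)"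
  proof -
    have "selberg_lambda d1 * selberg_lambda d2 * (T d1 d2 - X / real (lcm d1 d2))
        \<le> \<bar>selberg_lambda d1\<bar> * \<bar>selberg_lambda d2\<bar> * R" if "d1 \<in> D" "d2 \<in> D" for d1 d2
    proof -
      have "selberg_lambda d1 * selberg_lambda d2 * (T d1 d2 - X / real (lcm d1 d2))
          \<le> \<bar>selberg_lambda d1\<bar> * \<bar>selberg_lambda d2\<bar> * \<bar>T d1 d2 - X / real (lcm d1 d2)\<bar>"
        unfolding abs_mult[symmetric] by (rule abs_ge_self)
      also have "\<dots> \<le> \<bar>selberg_lambda d1\<bar> * \<bar>selberg_lambda d2\<bar> * R"
        using R[OF that] by (intro mult_left_mono) (auto simp: T_def)
      finally show ?thesis .
    qed
    then show ?thesis by (simp add: selberg_quadratic_form sum_mono)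
  qed
  also have "(\<Sum>d1\<in>D. \<Sum>d2\<in>D. \<bar>selberg_lambda d1\<bar> * \<bar>selberg_lambda d2\<bar> * R)
      = (\<Sum>d\<in>D. \<bar>selberg_lambda d\<bar>)\<^sup>2 * R"
    unfolding power2_eq_square unfolding sum_product unfolding sum_distrib_right ..
  also have "\<dots> \<le> (H / G)\<^sup>2 * R"
    using sum_abs_selberg_lambda_le R0 by (intro mult_right_mono power_mono) (auto intro: sum_nonneg)
  finally show ?thesis by simp
qed

end

section \<open>The sifting range \<open>P(z,k)\<close>\<close>

definition sifting_primes :: "real \<Rightarrow> nat \<Rightarrow> nat set" where
  "sifting_primes z k = {p. prime p \<and> real p \<le> z \<and> \<not> p dvd k}"

lemma finite_sifting_primes: "finite (sifting_primes z k)"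
  by (rule finite_subset[of _ "{..nat \<lceil>z\<rceil>}"])
    (auto simp: sifting_primes_def le_nat_iff le_ceiling_iff)

lemma Pzk_eq_prod: "Pzk z k = \<Prod>(sifting_primes z k)"
  unfolding Pzk_def sifting_primes_def by simp

lemma Pzk_pos: "0 < Pzk z k"
  unfolding Pzk_eq_prod by (rule prod_pos) (simp add: sifting_primes_def prime_gt_0_nat)

lemma squarefree_Pzk: "squarefree (Pzk z k)"
  unfolding Pzk_eq_prod
  by (rule squarefree_prod_coprime) (auto simp: sifting_primes_def primes_coprime squarefree_prime)

lemma coprime_Pzk: "coprime (Pzk z k) k"
  unfolding Pzk_eq_prod by (rule prod_coprime_left) (simp add: sifting_primes_def prime_imp_coprime)

lemma squarefree_eq_prod_prime_factors:
  fixes n :: nat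
  assumes "squarefree n"
  shows "n = \<Prod>(prime_factors n)"
proof -
  have "multiplicity p n = 1" if "p \<in> prime_factors n" for p
    using that assms squarefree_factorial_semiring'[of n] squarefree_imp_pos[OF assms] by simp
  then show ?thesis
    using prod_prime_factors[of n] squarefree_imp_pos[OF assms] by simp
qed

definition sieve_support :: "real \<Rightarrow> nat \<Rightarrow> nat set" where
  "sieve_support z k = {d. d dvd Pzk z k \<and> real d \<le> z}"

lemma selberg_sieve_sieve_support:
  assumes "1 \<le> z"
  shows "selberg_sieve (sieve_support z k)"
proof
  show "finite (sieve_support z k)"
    unfolding sieve_support_def using Pzk_pos[of z k] by (auto intro: finite_subset[of _ "{d. d dvd Pzk z k}"])
  show "1 \<in> sieve_support z k" using assms unfolding sieve_support_def by simp
  show "e \<in> sieve_support z k" if "d \<in> sieve_support z k" "e dvd d" for d e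
    using that Pzk_pos[of z k] dvd_imp_le[of e d] unfolding sieve_support_def
    by (auto intro: dvd_trans gr0I)
  show "squarefree d" if "d \<in> sieve_support z k" for d
    using that squarefree_Pzk[of z k] unfolding sieve_support_def by (auto intro: squarefree_mono)
qed

lemma sieve_support_eq:
  "sieve_support z k = {n. 1 \<le> n \<and> real n \<le> z \<and> coprime n k \<and> squarefree n}"
proof safe
  fix n assume n: "n \<in> sieve_support z k"
  then obtain m where m: "Pzk z k = n * m" unfolding sieve_support_def by blast
  show "coprime n k" using coprime_Pzk[of z k] m by simp
  show "squarefree n" using squarefree_Pzk[of z k] m by (metis squarefree_multD(1))
  then show "1 \<le> n" using squarefree_imp_pos by (simp add: Suc_le_eq)
  show "real n \<le> z" using n unfolding sieve_support_def by simp
next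
  fix n :: nat assume n: "1 \<le> n" "real n \<le> z" "coprime n k" "squarefree n"
  have "prime_factors n \<subseteq> sifting_primes z k"
  proof
    fix p assume p: "p \<in> prime_factors n"
    then have "prime p" "p dvd n" by (auto simp: in_prime_factors_iff)
    moreover have "p \<le> n" using \<open>p dvd n\<close> n(1) by (simp add: dvd_imp_le)
    moreover have "\<not> p dvd k"
      using \<open>prime p\<close> \<open>p dvd n\<close> n(3) by (meson coprime_common_divisor not_prime_unit)
    ultimately show "p \<in> sifting_primes z k" using n(2) unfolding sifting_primes_def by auto
  qed
  then have "\<Prod>(prime_factors n) dvd Pzk z k"
    unfolding Pzk_eq_prod by (rule prod_dvd_prod_subset[OF finite_sifting_primes])
  then show "n \<in> sieve_support z k"
    using n squarefree_eq_prod_prime_factors[OF n(4)] unfolding sieve_support_def by simp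
qed

lemma coprime_lcm_sieve_support:
  assumes "d1 \<in> sieve_support z k" "d2 \<in> sieve_support z k"
  shows "coprime (lcm d1 d2) k"
proof -
  have "lcm d1 d2 dvd Pzk z k" using assms by (simp add: sieve_support_def)
  then show ?thesis using coprime_Pzk[of z k] by (meson coprime_imp_coprime dvd_trans)
qed

lemma sum_coprime_le_eq_sum_sieve_support:
  assumes "\<And>n. \<not> squarefree n \<Longrightarrow> g n = 0"
  shows "(\<Sum>n\<in>{n::nat. 1 \<le> n \<and> real n \<le> z \<and> coprime n k}. g n) = (\<Sum>n\<in>sieve_support z k. g n)"
proof (rule sum.mono_neutral_right)
  show "finite {n::nat. 1 \<le> n \<and> real n \<le> z \<and> coprime n k}"
    by (rule finite_subset[of _ "{..nat \<lceil>z\<rceil>}"]) (auto simp: le_nat_iff le_ceiling_iff)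
qed (use assms in \<open>auto simp: sieve_support_eq\<close>)

lemma S_k_eq_G:
  assumes "1 \<le> z"
  shows "S_k k z = selberg_sieve.G (sieve_support z k)"
proof -
  interpret selberg_sieve "sieve_support z k" by (rule selberg_sieve_sieve_support[OF assms])
  show ?thesis
    unfolding S_k_def G_def
    by (subst sum_coprime_le_eq_sum_sieve_support)
       (auto simp: moebius_mu_eq_0 moebius_mu_squared squarefree_D intro!: sum.cong)
qed

lemma H_k_eq_H:
  assumes "1 \<le> z"
  shows "H_k k z = selberg_sieve.H (sieve_support z k)"
proof -
  interpret selberg_sieve "sieve_support z k" by (rule selberg_sieve_sieve_support[OF assms])
  show ?thesis
    unfolding H_k_def H_def
    by (subst sum_coprime_le_eq_sum_sieve_support)
       (auto simp: moebius_mu_eq_0 moebius_mu_squared squarefree_D intro!: sum.cong)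
qed

theorem proposition3p2:
  fixes x y z :: real and k :: nat and l :: int and f f' :: "real \<Rightarrow> real"
  assumes "0 \<le> x" and "0 < y" and "1 \<le> k" and "1 \<le> z"
    and "W11 {x..x+y} f f'"
    and "\<forall>t\<in>{x..x+y}. 0 \<le> f t"
  shows "(\<Sum>n\<in>{n::int. x \<le> real_of_int n \<and> real_of_int n \<le> x + y \<and> [n = l] (mod int k)
              \<and> coprime n (int (Pzk z k))}. f (real_of_int n))
         \<le> L1_norm {x..x+y} f / (real k * S_k k z)
           + (sup_norm {x..x+y} f + L1_norm {x..x+y} f') * (H_k k z)\<^sup>2 / (S_k k z)\<^sup>2"
proof -
  interpret selberg_sieve "sieve_support z k" by (rule selberg_sieve_sieve_support[OF assms(4)])
  define A where "A = progression_points x (x + y) l (int k)"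
  define E where "E = sup_norm {x..x+y} f + L1_norm {x..x+y} f'"
  have "(\<Sum>n\<in>{n\<in>A. coprime n (int (Pzk z k))}. f n)
      \<le> integral {x..x+y} f / k / G + (H / G)\<^sup>2 * E"
  proof (rule selberg_upper_bound)
    show "finite A" by (simp add: A_def)
  next
    fix d1 d2 assume d: "d1 \<in> sieve_support z k" "d2 \<in> sieve_support z k"
    then have "1 \<le> lcm d1 d2" using pos_D by (simp add: Suc_le_eq lcm_pos_nat)
    then show "\<bar>(\<Sum>n\<in>{n\<in>A. int (lcm d1 d2) dvd n}. f n) - integral {x..x+y} f / k / real (lcm d1 d2)\<bar> \<le> E"
      using W11_sum_progression_points_dvd_approx[OF assms(5) _ assms(3) _ coprime_lcm_sieve_support[OF d]] assms(2)
      by (simp add: A_def E_def)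
  qed (use assms(6) in \<open>auto simp: A_def progression_points_def sieve_support_def\<close>)
  moreover have "integral {x..x+y} f = L1_norm {x..x+y} f"
    unfolding L1_norm_def using assms(6) by (intro integral_cong) simp
  ultimately show ?thesis
    using S_k_eq_G[OF assms(4)] H_k_eq_H[OF assms(4)]
    by (simp add: A_def E_def progression_points_def power_divide conj_assoc mult.commute)
qed

end
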